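(* Let $m,n\ge 1$ and let $A\in\{0,1\}^{m\times n}$ have exactly three ones in each row. If $\operatorname{conv}(\mathrm{NPadj}(A))$ is not a line segment (equivalently, $\mathrm{NPadj}(A)$ has more than two points), then there is no finite simple graph $G$ with $\mathrm{NPadj}(A)\le_a \mathrm{Stable}(G)$. In other words, $\operatorname{conv}(\mathrm{NPadj}(A))$ is not affinely equivalent to any face of $\operatorname{conv}(\mathrm{Stable}(G))$, for any graph $G$.
   Context: Polytopes are identified with their vertex sets; every 0/1 set $X$ is the vertex set of $\operatorname{conv}(X)$. **Definition of $\mathrm{NPadj}(A)$.** Let $m,n\ge1$ and let $A\in\{0,1\}^{m\times n}$ have exactly three ones in each row. Index the coordinates of $\mathbb{R}^{3n+3}$ by $y_1,y_2,y_3$ and by $x_j,\bar x_j,x'_j$ for $j\in[n]=\{1,\dots,n\}$. Then $\mathrm{NPadj}(A)$ is the set of vectors in $\{0,1\}^{3n+3}$ satisfying: - $x_j+\bar x_j=1$ for all $j\in[n]$; - $y_1+y_2+x'_j+\bar x_j=2$ for all $j\in[n]$; - for each row of $A$, with ones in columns $i<j<k$, the equation $y_3+x_i+x'_j+x'_k=2$. **Graph polytope.** For a graph $G=(V,E)$, $\mathrm{Stable}(G)=\{x\in\{0,1\}^V : x_u+x_v\le 1 \text{ for every edge } \{u,v\}\in E\}$. **Affine reduction of polytopes.** For finite sets $P,Q$ of 0/1 vectors, $P\le_a Q$ means: there is an affine map $\alpha$ defined on $\operatorname{conv}(P)$, injective there, such that $\alpha(\operatorname{conv}(P))$ is a face (possibly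 improper) of $\operatorname{conv}(Q)$. *)

theory Defs
  imports "HOL-Analysis.Analysis"
begin

text \<open>Coordinates of R^(3n+3): y1,y2,y3 and x_j, xbar_j, x'_j for each column j.\<close>
datatype 'n npc = Y1 | Y2 | Y3 | X 'n | Xb 'n | Xp 'n

instance npc :: (finite) finite
proof
  have eq: "(UNIV :: 'a npc set) = {Y1, Y2, Y3} \<union> range X \<union> range Xb \<union> range Xp"
    by (auto intro: npc.exhaust)
  have fin: "finite ({Y1, Y2, Y3} \<union> range X \<union> range Xb \<union> range Xp :: 'a npc set)"
    by simp
  show "finite (UNIV :: 'a npc set)" using eq fin by metis
qed

definition three_ones :: "real^'n^'m \<Rightarrow> bool" where
  "three_ones A \<longleftrightarrow> (\<forall>r i. A$r$i \<in> {0,1}) \<and> (\<forall>r. card {j. A$r$j = 1} = 3)"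

definition NPadj :: "real^('n::{finite,linorder})^('m::finite) \<Rightarrow> (real^('n npc)) set" where
  "NPadj A = {v. (\<forall>c. v$c \<in> {0,1})
     \<and> (\<forall>j. v$X j + v$Xb j = 1)
     \<and> (\<forall>j. v$Y1 + v$Y2 + v$Xp j + v$Xb j = 2)
     \<and> (\<forall>r i j k. i < j \<and> j < k \<and> A$r$i = 1 \<and> A$r$j = 1 \<and> A$r$k = 1
            \<longrightarrow> v$Y3 + v$X i + v$Xp j + v$Xp k = 2)}"

definition simple_graph :: "('v \<Rightarrow> 'v \<Rightarrow> bool) \<Rightarrow> bool" where
  "simple_graph E \<longleftrightarrow> (\<forall>u v. E u v \<longrightarrow> E v u) \<and> (\<forall>u. \<not> E u u)"

definition Stable :: "('v::finite \<Rightarrow> 'v \<Rightarrow> bool) \<Rightarrow> (real^'v) set" where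
  "Stable E = {x. (\<forall>v. x$v \<in> {0,1}) \<and> (\<forall>u v. E u v \<longrightarrow> x$u + x$v \<le> 1)}"

definition aff_red :: "'a::euclidean_space set \<Rightarrow> 'b::euclidean_space set \<Rightarrow> bool" where
  "aff_red P Q \<longleftrightarrow> (\<exists>L b. linear L \<and> inj_on (\<lambda>x. L x + b) (convex hull P)
       \<and> ((\<lambda>x. L x + b) ` (convex hull P)) face_of (convex hull Q))"

end

theory Submission
  imports Defs
begin

text \<open>Complementation \<open>v \<mapsto> 1 - v\<close> maps NPadj(A) to itself. Together with the exchange of
  y1 and y2 it gives a free action of the Klein four-group on the points with y1 + y2 = 1, and
  every other point is one fixed vertex or its complement; so the number of points is 2 modulo 4.

  An injective affine map onto a face of conv Stable(G) sends the points of NPadj(A) bijectively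
  onto the stable sets lying in the face, and turns complementation into the reflection
  \<open>x \<mapsto> 2c - x\<close> in the image c of the centre of the cube. These stable sets are then exactly
  the x for which x and 2c - x are both stable. If a, b are two of them with b \<noteq> 2c - a, then
  2c has coordinate 1 wherever a and b differ, and flipping exactly those coordinates preserves
  the set. Reflection and this flip again generate a free action of the Klein four-group, so the
  number of points is divisible by 4.\<close>

lemma convex_comb_01_eq:
  fixes x y u :: real
  assumes u: "0 < u" "u < 1" and x: "0 \<le> x" "x \<le> 1" and y: "0 \<le> y" "y \<le> 1"
    and z: "(1 - u) * x + u * y \<in> {0, 1}"
  shows "x = y"
proof -
  have "0 \<le> (1 - u) * x" "0 \<le> u * y" "0 \<le> (1 - u) * (1 - x)" "0 \<le> u * (1 - y)"
    using u x y by simp_all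
  moreover have "(1 - u) * x + u * y = 0 \<or> (1 - u) * (1 - x) + u * (1 - y) = 0"
    using z by (auto simp: algebra_simps)
  ultimately have "(1 - u) * x = 0 \<and> u * y = 0 \<or> (1 - u) * (1 - x) = 0 \<and> u * (1 - y) = 0"
    by linarith
  then show ?thesis
    using u by (metis diff_gt_0_iff_gt eq_iff_diff_eq_0 mult_eq_0_iff order_less_irrefl)
qed

lemma extreme_point_of_convex_hull_01:
  fixes T :: "(real^'k) set"
  assumes T01: "\<And>x i. x \<in> T \<Longrightarrow> x$i \<in> {0, 1}" and "z \<in> T"
  shows "z extreme_point_of convex hull T"
proof -
  have hull_cube: "convex hull T \<subseteq> cbox 0 1"
  proof (rule hull_minimal)
    show "T \<subseteq> cbox 0 1"
    proof
      fix x assume "x \<in> T"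
      then have "0 \<le> x$i \<and> x$i \<le> 1" for i using T01[of x i] by auto
      then show "x \<in> cbox 0 1" by (simp add: mem_box_cart)
    qed
  qed (rule convex_box)
  have "z \<notin> open_segment a b" if ab: "a \<in> convex hull T" "b \<in> convex hull T" for a b
  proof
    assume "z \<in> open_segment a b"
    then obtain u where "a \<noteq> b" "0 < u" "u < 1" and z: "z = (1 - u) *\<^sub>R a + u *\<^sub>R b"
      by (auto simp: in_segment)
    moreover from \<open>a \<noteq> b\<close> obtain i where "a$i \<noteq> b$i" by (metis vec_eq_iff)
    moreover have "0 \<le> a$i" "a$i \<le> 1" "0 \<le> b$i" "b$i \<le> 1"
      using ab hull_cube by (force simp: mem_box_cart)+
    moreover have "(1 - u) * a$i + u * b$i \<in> {0, 1}"
      using T01[OF \<open>z \<in> T\<close>, of i] z by simp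
    ultimately show False using convex_comb_01_eq by blast
  qed
  then show ?thesis using \<open>z \<in> T\<close> by (auto simp: extreme_point_of_def hull_inc)
qed

lemma affine_image_in_open_segment_iff:
  assumes L: "linear L" and inj: "inj_on (\<lambda>x. L x + d) S" and "convex S"
    and S: "a \<in> S" "b \<in> S" "p \<in> S"
  shows "L p + d \<in> open_segment (L a + d) (L b + d) \<longleftrightarrow> p \<in> open_segment a b"
proof -
  have comb: "(1 - u) *\<^sub>R (L a + d) + u *\<^sub>R (L b + d) = L ((1 - u) *\<^sub>R a + u *\<^sub>R b) + d" for u
  proof -
    have "L ((1 - u) *\<^sub>R a + u *\<^sub>R b) = (1 - u) *\<^sub>R L a + u *\<^sub>R L b"
      by (simp only: linear_add[OF L] linear_scale[OF L])
    then show ?thesis by (simp add: algebra_simps)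
  qed
  have inj_eq: "L x = L y \<longleftrightarrow> x = y" if "x \<in> S" "y \<in> S" for x y
    using inj_onD[OF inj _ that] by auto
  have "L p + d = (1 - u) *\<^sub>R (L a + d) + u *\<^sub>R (L b + d) \<longleftrightarrow> p = (1 - u) *\<^sub>R a + u *\<^sub>R b"
    if "0 < u" "u < 1" for u
  proof -
    have "(1 - u) *\<^sub>R a + u *\<^sub>R b \<in> S"
      using \<open>convex S\<close> S that by (simp add: convex_alt)
    then show ?thesis unfolding comb using inj_eq[OF S(3)] by simp
  qed
  then show ?thesis
    using inj_eq[OF S(1,2)] by (auto simp: in_segment)
qed

lemma extreme_point_of_affine_image_iff:
  assumes "linear L" and "inj_on (\<lambda>x. L x + d) S" and "convex S" and "p \<in> S"
  shows "(L p + d) extreme_point_of ((\<lambda>x. L x + d) ` S) \<longleftrightarrow> p extreme_point_of S"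
  using affine_image_in_open_segment_iff[OF assms(1-3)] \<open>p \<in> S\<close>
  by (auto simp: extreme_point_of_def)

lemma affine_face_vertices:
  assumes L: "linear L" and inj: "inj_on (\<lambda>x. L x + d) (convex hull N)"
    and face: "(\<lambda>x. L x + d) ` (convex hull N) face_of convex hull S"
    and N: "\<And>v. v \<in> N \<Longrightarrow> v extreme_point_of convex hull N"
    and S: "\<And>w. w \<in> S \<Longrightarrow> w extreme_point_of convex hull S"
  shows "(\<lambda>x. L x + d) ` N = S \<inter> (\<lambda>x. L x + d) ` (convex hull N)"
proof -
  let ?f = "\<lambda>x. L x + d"
  have ext_iff: "?f p extreme_point_of convex hull S \<longleftrightarrow> p extreme_point_of convex hull N"
    if "p \<in> convex hull N" for p
    using extreme_point_of_face[OF face] extreme_point_of_affine_image_iff[OF L inj _ that] that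
    by auto
  show ?thesis
  proof (intro equalityI subsetI)
    fix w assume "w \<in> ?f ` N"
    then obtain v where "v \<in> N" "w = ?f v" by blast
    then have "v \<in> convex hull N" by (simp add: hull_inc)
    with \<open>v \<in> N\<close> have "?f v extreme_point_of convex hull S" using N ext_iff by blast
    then have "?f v \<in> S" by (rule extreme_point_of_convex_hull)
    then show "w \<in> S \<inter> ?f ` (convex hull N)"
      using \<open>w = ?f v\<close> \<open>v \<in> convex hull N\<close> by blast
  next
    fix w assume "w \<in> S \<inter> ?f ` (convex hull N)"
    then obtain p where "w \<in> S" "p \<in> convex hull N" "w = ?f p" by blast
    then show "w \<in> ?f ` N"
      using S ext_iff extreme_point_of_convex_hull by blast
  qed
qed

lemma face_of_midpoint:
  assumes "F face_of T" "x \<in> T" "y \<in> T" "midpoint x y \<in> F"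
  shows "x \<in> F"
  using assms face_ofD[OF assms(1) midpoint_in_open_segment[THEN iffD2]]
  by (cases "x = y") auto

lemma card_dvd_4_if_free_Klein_action:
  assumes "finite S" and "g ` S \<subseteq> S" "h ` S \<subseteq> S"
    and "\<And>x. x \<in> S \<Longrightarrow> g (g x) = x" "\<And>x. x \<in> S \<Longrightarrow> h (h x) = x"
    and "\<And>x. x \<in> S \<Longrightarrow> g (h x) = h (g x)"
    and "\<And>x. x \<in> S \<Longrightarrow> g x \<noteq> x" "\<And>x. x \<in> S \<Longrightarrow> h x \<noteq> x"
    and "\<And>x. x \<in> S \<Longrightarrow> g (h x) \<noteq> x"
  shows "4 dvd card S"
  using assms
proof (induction S rule: finite_psubset_induct)
  case (psubset S)
  show ?case
  proof (cases "S = {}")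
    case False
    then obtain x where x: "x \<in> S" by blast
    have hx: "h x \<in> S" using psubset.prems(2) x by blast
    define Orb where "Orb = {x, g x, h x, g (h x)}"
    have Orb_sub: "Orb \<subseteq> S" using psubset.prems(1,2) x hx by (auto simp: Orb_def)
    have "g x \<noteq> h x"
    proof
      assume "g x = h x"
      then have "g (h x) = x" using psubset.prems(3)[OF x] by metis
      then show False using psubset.prems(8)[OF x] by blast
    qed
    moreover have "g x \<noteq> g (h x)"
    proof
      assume "g x = g (h x)"
      then have "x = h x" using psubset.prems(3)[OF x] psubset.prems(3)[OF hx] by metis
      then show False using psubset.prems(7)[OF x] by simp
    qed
    moreover note psubset.prems(6)[OF x] psubset.prems(7)[OF x] psubset.prems(8)[OF x]
      psubset.prems(6)[OF hx]
    ultimately have "card Orb = 4" by (simp add: Orb_def)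
    have gx: "g x \<in> S" using psubset.prems(1) x by blast
    have Orb_closed: "g ` Orb \<subseteq> Orb" "h ` Orb \<subseteq> Orb"
      using psubset.prems(3)[OF x] psubset.prems(3)[OF hx] psubset.prems(4)[OF x]
        psubset.prems(4)[OF gx] psubset.prems(5)[OF x, symmetric]
      by (auto simp: Orb_def)
    have "g ` (S - Orb) \<subseteq> S - Orb"
      using psubset.prems(1,3) Orb_closed(1) by (force simp: image_subset_iff)
    moreover have "h ` (S - Orb) \<subseteq> S - Orb"
      using psubset.prems(2,4) Orb_closed(2) by (force simp: image_subset_iff)
    ultimately have "4 dvd card (S - Orb)"
      using psubset.prems Orb_sub x by (intro psubset.IH) (auto simp: Orb_def)
    moreover have "card S = card (S - Orb) + 4"
      using \<open>card Orb = 4\<close> Orb_sub psubset.hyps card_Diff_subset[of Orb S] card_mono[of S Orb]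
      by (simp add: finite_subset)
    ultimately show ?thesis by simp
  qed simp
qed

lemma finite_vectors_with_coords_in:
  assumes "finite S"
  shows "finite {v :: 'a^'k. \<forall>i. v$i \<in> S}"
proof -
  have "{v :: 'a^'k. \<forall>i. v$i \<in> S} \<subseteq> (\<lambda>f. \<chi> i. f i) ` PiE UNIV (\<lambda>_. S)"
  proof
    fix v :: "'a^'k" assume "v \<in> {v. \<forall>i. v$i \<in> S}"
    then have "(\<lambda>i. v$i) \<in> PiE UNIV (\<lambda>_. S)" by auto
    then show "v \<in> (\<lambda>f. \<chi> i. f i) ` PiE UNIV (\<lambda>_. S)" by force
  qed
  moreover have "finite (PiE (UNIV :: 'k set) (\<lambda>_. S))"
    using assms by (simp add: finite_PiE)
  ultimately show ?thesis by (metis finite_subset finite_imageI)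
qed

definition central_core :: "'a::real_vector set \<Rightarrow> 'a \<Rightarrow> 'a set" where
  "central_core S c = {x \<in> S. 2 *\<^sub>R c - x \<in> S}"

definition flip_coords :: "'k set \<Rightarrow> real^'k \<Rightarrow> real^'k" where
  "flip_coords D v = (\<chi> i. if i \<in> D then 1 - v$i else v$i)"

lemma flip_coords_nth [simp]: "flip_coords D v $ i = (if i \<in> D then 1 - v$i else v$i)"
  by (simp add: flip_coords_def)

lemma flip_coords_flip_coords [simp]: "flip_coords D (flip_coords D v) = v"
  by (simp add: vec_eq_iff)

lemma reflect_flip_coords:
  assumes "\<And>i. i \<in> D \<Longrightarrow> 2 * c$i = 1"
  shows "2 *\<^sub>R c - flip_coords D v = flip_coords D (2 *\<^sub>R c - v)"
  using assms by (simp add: vec_eq_iff)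

lemma central_core_reflect:
  "x \<in> central_core S c \<Longrightarrow> 2 *\<^sub>R c - x \<in> central_core S c"
  by (simp add: central_core_def)

lemma Stable_edge: "x \<in> Stable E \<Longrightarrow> E u v \<Longrightarrow> x$u + x$v \<le> 1"
  by (simp add: Stable_def)

context
  fixes E :: "'v::finite \<Rightarrow> 'v \<Rightarrow> bool" and c :: "real^'v"
begin

lemma central_core_Stable_coords:
  assumes "x \<in> central_core (Stable E) c"
  shows "x$i \<in> {0, 1}" "2 * c$i - x$i \<in> {0, 1}"
  using assms by (auto simp: central_core_def Stable_def)

lemma central_core_Stable_edge:
  assumes "x \<in> central_core (Stable E) c" and "E u v \<or> E v u"
  shows "x$u + x$v \<le> 1" "(2 * c$u - x$u) + (2 * c$v - x$v) \<le> 1"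
proof -
  have "x \<in> Stable E" "2 *\<^sub>R c - x \<in> Stable E"
    using assms(1) by (simp_all add: central_core_def)
  with assms(2) show "x$u + x$v \<le> 1" "(2 * c$u - x$u) + (2 * c$v - x$v) \<le> 1"
    using Stable_edge[of _ E u v] Stable_edge[of _ E v u] by fastforce+
qed

lemma central_core_Stable_half:
  assumes "x \<in> central_core (Stable E) c" "y \<in> central_core (Stable E) c" and "x$i \<noteq> y$i"
  shows "2 * c$i = 1"
  using central_core_Stable_coords[OF assms(1), of i] central_core_Stable_coords[OF assms(2), of i]
    assms(3) by auto

lemma central_core_Stable_edge_zero:
  assumes K: "a \<in> central_core (Stable E) c" "b \<in> central_core (Stable E) c"
      "w \<in> central_core (Stable E) c"
    and uv: "E u v \<or> E v u" and "a$u \<noteq> b$u" "a$v = b$v"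
  shows "w$v = 0"
proof -
  note a = central_core_Stable_coords[OF K(1)] and w = central_core_Stable_coords[OF K(3)]
  note a_edge = central_core_Stable_edge[OF K(1) uv] and b_edge = central_core_Stable_edge[OF K(2) uv]
  have "2 * c$u = 1" using central_core_Stable_half[OF K(1,2) \<open>a$u \<noteq> b$u\<close>] .
  have "2 * c$v \<in> {0, 1, 2}" using a(1)[of v] a(2)[of v] by auto
  moreover have "2 * c$v \<noteq> 1"
  proof
    assume "2 * c$v = 1"
    with \<open>2 * c$u = 1\<close> have "a$u + a$v = 1" "b$u + b$v = 1" using a_edge b_edge by linarith+
    then show False using \<open>a$u \<noteq> b$u\<close> \<open>a$v = b$v\<close> by simp
  qed
  moreover have "2 * c$v \<noteq> 2"
  proof
    assume "2 * c$v = 2"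
    then have "a$v = 1" using a(1)[of v] a(2)[of v] by auto
    then have "a$u = 0" using a(1)[of u] a_edge(1) by auto
    then show False using \<open>2 * c$u = 1\<close> \<open>2 * c$v = 2\<close> \<open>a$v = 1\<close> a_edge(2) by simp
  qed
  ultimately have "2 * c$v = 0" by simp
  then show ?thesis using w(1)[of v] w(2)[of v] by auto
qed

lemma flip_coords_central_core_Stable:
  assumes a: "a \<in> central_core (Stable E) c" and b: "b \<in> central_core (Stable E) c"
    and w: "w \<in> central_core (Stable E) c"
  shows "flip_coords {i. a$i \<noteq> b$i} w \<in> central_core (Stable E) c"
proof -
  let ?D = "{i. a$i \<noteq> b$i}"
  have half: "2 * c$i = 1" if "i \<in> ?D" for i
    using central_core_Stable_half[OF a b] that by simp
  have flip_Stable: "flip_coords ?D x \<in> Stable E" if x: "x \<in> central_core (Stable E) c" for x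
    unfolding Stable_def
  proof (intro CollectI conjI allI impI)
    fix i show "flip_coords ?D x $ i \<in> {0, 1}"
      using central_core_Stable_coords[OF x, of i] by auto
  next
    fix u v assume "E u v"
    then have uv: "E u v \<or> E v u" "E v u \<or> E u v" by simp_all
    show "flip_coords ?D x $ u + flip_coords ?D x $ v \<le> 1"
      using central_core_Stable_edge[OF x uv(1)] half[of u] half[of v]
        central_core_Stable_edge_zero[OF a b x uv(1)] central_core_Stable_edge_zero[OF a b x uv(2)]
        central_core_Stable_coords[OF x, of u] central_core_Stable_coords[OF x, of v]
      by (cases "u \<in> ?D"; cases "v \<in> ?D") auto
  qed
  have "2 *\<^sub>R c - flip_coords ?D w = flip_coords ?D (2 *\<^sub>R c - w)"
    using half by (rule reflect_flip_coords)
  then show ?thesis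
    using flip_Stable[OF w] flip_Stable[OF central_core_reflect[OF w]]
    by (simp add: central_core_def)
qed

lemma card_central_core_Stable_dvd_4:
  assumes a: "a \<in> central_core (Stable E) c" and b: "b \<in> central_core (Stable E) c"
    and "a \<noteq> b" and "b \<noteq> 2 *\<^sub>R c - a"
  shows "4 dvd card (central_core (Stable E) c)"
proof -
  let ?K = "central_core (Stable E) c" and ?D = "{i. a$i \<noteq> b$i}"
  let ?g = "\<lambda>x. 2 *\<^sub>R c - x" and ?h = "flip_coords ?D"
  have half: "2 * c$i = 1" if "i \<in> ?D" for i
    using central_core_Stable_half[OF a b] that by simp
  obtain i0 where "i0 \<in> ?D" using \<open>a \<noteq> b\<close> by (auto simp: vec_eq_iff)
  obtain j0 where "j0 \<notin> ?D" "2 * c$j0 = 1"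
  proof -
    have "b$i = 2 * c$i - a$i" if "\<And>j. j \<notin> ?D \<Longrightarrow> 2 * c$j \<noteq> 1" for i
      using that[of i] half[of i] central_core_Stable_coords[OF a, of i]
        central_core_Stable_coords[OF b, of i] by auto
    then show ?thesis using that \<open>b \<noteq> 2 *\<^sub>R c - a\<close> by (auto simp: vec_eq_iff)
  qed
  have "finite ?K"
    using finite_vectors_with_coords_in[of "{0, 1 :: real}"]
    by (rule finite_subset[rotated]) (auto simp: central_core_def Stable_def)
  then show ?thesis
  proof (rule card_dvd_4_if_free_Klein_action[where g = ?g and h = ?h])
    show "?g ` ?K \<subseteq> ?K" using central_core_reflect by blast
    show "?h ` ?K \<subseteq> ?K" using flip_coords_central_core_Stable[OF a b] by blast
    show "?g (?h x) = ?h (?g x)" for x using half by (rule reflect_flip_coords)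
    fix x assume x: "x \<in> ?K"
    note coords = central_core_Stable_coords[OF x]
    show "?g (?g x) = x" "?h (?h x) = x" by simp_all
    show "?g x \<noteq> x"
    proof
      assume "?g x = x"
      then have "?g x $ i0 = x $ i0" by simp
      then show False using coords(1)[of i0] half[OF \<open>i0 \<in> ?D\<close>] by auto
    qed
    show "?h x \<noteq> x"
    proof
      assume "?h x = x"
      then have "?h x $ i0 = x $ i0" by simp
      then show False using \<open>i0 \<in> ?D\<close> coords(1)[of i0] by auto
    qed
    show "?g (?h x) \<noteq> x" using \<open>j0 \<notin> ?D\<close> \<open>2 * c$j0 = 1\<close> coords(1)[of j0]
      by (auto simp: vec_eq_iff)
  qed
qed

end

lemma affine_image_flip_coords_UNIV:
  assumes "linear L"
  shows "L (flip_coords UNIV v) + d = 2 *\<^sub>R (L (\<chi> i. 1/2) + d) - (L v + d)"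
proof -
  have "flip_coords UNIV v = 2 *\<^sub>R (\<chi> i. 1/2) - v" by (simp add: vec_eq_iff)
  then show ?thesis
    by (simp add: linear_diff[OF assms] linear_scale[OF assms]) (simp add: algebra_simps scaleR_2)
qed

lemma affine_face_of_Stable_vertices:
  fixes N :: "(real^'k) set" and E :: "'v::finite \<Rightarrow> 'v \<Rightarrow> bool"
  assumes N01: "\<And>v i. v \<in> N \<Longrightarrow> v$i \<in> {0, 1}"
    and N_sym: "\<And>v. v \<in> N \<Longrightarrow> flip_coords UNIV v \<in> N" and "p \<in> N"
    and L: "linear L" and inj: "inj_on (\<lambda>x. L x + d) (convex hull N)"
    and face: "(\<lambda>x. L x + d) ` (convex hull N) face_of convex hull Stable E"
  shows "(\<lambda>x. L x + d) ` N = central_core (Stable E) (L (\<chi> i. 1/2) + d)"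
proof -
  define f where "f = (\<lambda>x. L x + d)"
  define c where "c = f (\<chi> i. 1/2)"
  have "w extreme_point_of convex hull Stable E" if "w \<in> Stable E" for w
    using that by (rule extreme_point_of_convex_hull_01[rotated]) (simp add: Stable_def)
  then have vertices: "f ` N = Stable E \<inter> f ` (convex hull N)"
    unfolding f_def
    using affine_face_vertices[OF L inj face extreme_point_of_convex_hull_01[OF N01]] by blast
  have "midpoint p (flip_coords UNIV p) = (\<chi> i. 1/2)"
    by (simp add: midpoint_def vec_eq_iff)
  then have "c \<in> f ` (convex hull N)"
    using midpoints_in_convex_hull[OF hull_inc[OF \<open>p \<in> N\<close>] hull_inc[OF N_sym[OF \<open>p \<in> N\<close>]]]
    by (simp add: c_def)
  have "f ` N = central_core (Stable E) c"
  proof (intro equalityI subsetI)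
    fix w assume "w \<in> f ` N"
    then obtain v where v: "v \<in> N" "w = f v" by blast
    have fN: "f ` N \<subseteq> Stable E" using vertices by blast
    have "f (flip_coords UNIV v) = 2 *\<^sub>R c - f v"
      unfolding c_def f_def by (rule affine_image_flip_coords_UNIV[OF L])
    then have "2 *\<^sub>R c - w = f (flip_coords UNIV v)" by (simp add: v(2))
    then have "w \<in> Stable E" "2 *\<^sub>R c - w \<in> Stable E"
      using fN v N_sym[OF v(1)] by (simp_all add: image_subset_iff)
    then show "w \<in> central_core (Stable E) c" by (simp add: central_core_def)
  next
    fix x assume "x \<in> central_core (Stable E) c"
    then have "x \<in> Stable E" "2 *\<^sub>R c - x \<in> Stable E" by (simp_all add: central_core_def)
    moreover have "midpoint x (2 *\<^sub>R c - x) = c" by (simp add: midpoint_def algebra_simps)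
    ultimately have "x \<in> f ` (convex hull N)"
      using face_of_midpoint[OF face[folded f_def]] hull_inc \<open>c \<in> f ` (convex hull N)\<close> by metis
    then show "x \<in> f ` N" using vertices \<open>x \<in> Stable E\<close> by blast
  qed
  then show ?thesis by (simp add: c_def f_def)
qed

lemma aff_red_Stable_card_dvd_4:
  fixes N :: "(real^'k) set" and E :: "'v::finite \<Rightarrow> 'v \<Rightarrow> bool"
  assumes N01: "\<And>v i. v \<in> N \<Longrightarrow> v$i \<in> {0, 1}"
    and N_sym: "\<And>v. v \<in> N \<Longrightarrow> flip_coords UNIV v \<in> N"
    and "card N > 2" and "aff_red N (Stable E)"
  shows "4 dvd card N"
proof -
  obtain L d where L: "linear L" and inj: "inj_on (\<lambda>x. L x + d) (convex hull N)"
    and face: "(\<lambda>x. L x + d) ` (convex hull N) face_of convex hull Stable E"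
    using \<open>aff_red N (Stable E)\<close> unfolding aff_red_def by blast
  define f where "f = (\<lambda>x. L x + d)"
  define c where "c = f (\<chi> i. 1/2)"
  have inj_N: "inj_on f N" using inj hull_subset unfolding f_def by (rule inj_on_subset)
  obtain p where p: "p \<in> N"
    using \<open>card N > 2\<close> by (metis all_not_in_conv card.empty not_less_zero)
  have "card {p, flip_coords UNIV p} \<le> 2" by (simp add: card_insert_if)
  then have "card (N - {p, flip_coords UNIV p}) > 0"
    using diff_card_le_card_Diff[of "{p, flip_coords UNIV p}" N] \<open>card N > 2\<close> by simp
  then obtain q where q: "q \<in> N" "q \<noteq> p" "q \<noteq> flip_coords UNIV p"
    by (force simp: card_gt_0_iff)
  have core: "f ` N = central_core (Stable E) c"
    using affine_face_of_Stable_vertices[OF N01 N_sym p L inj face] by (simp add: f_def c_def)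
  have "4 dvd card (central_core (Stable E) c)"
  proof (rule card_central_core_Stable_dvd_4)
    show "f p \<in> central_core (Stable E) c" "f q \<in> central_core (Stable E) c"
      using core p q by blast+
    show "f p \<noteq> f q" using inj_onD[OF inj_N] p q by blast
    have "2 *\<^sub>R c - f p = f (flip_coords UNIV p)"
      using affine_image_flip_coords_UNIV[OF L] by (simp add: c_def f_def)
    then show "f q \<noteq> 2 *\<^sub>R c - f p"
      using inj_onD[OF inj_N] p q N_sym by metis
  qed
  then show ?thesis using core card_image[OF inj_N] by simp
qed

definition low_vertex :: "real^('n::finite npc)" where
  "low_vertex = (\<chi> c. case c of Xb _ \<Rightarrow> 1 | Xp _ \<Rightarrow> 1 | _ \<Rightarrow> 0)"

definition swap_y :: "real^('n::finite npc) \<Rightarrow> real^('n npc)" where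
  "swap_y v = (\<chi> c. v $ (case c of Y1 \<Rightarrow> Y2 | Y2 \<Rightarrow> Y1 | _ \<Rightarrow> c))"

lemma low_vertex_nth [simp]:
  "low_vertex $ Y1 = 0" "low_vertex $ Y2 = 0" "low_vertex $ Y3 = 0"
  "low_vertex $ X j = 0" "low_vertex $ Xb j = 1" "low_vertex $ Xp j = 1"
  by (simp_all add: low_vertex_def)

lemma swap_y_nth [simp]:
  "swap_y v $ Y1 = v $ Y2" "swap_y v $ Y2 = v $ Y1" "swap_y v $ Y3 = v $ Y3"
  "swap_y v $ X j = v $ X j" "swap_y v $ Xb j = v $ Xb j" "swap_y v $ Xp j = v $ Xp j"
  by (simp_all add: swap_y_def)

lemma low_vertex_ne_flip_coords: "low_vertex \<noteq> flip_coords UNIV low_vertex"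
proof -
  have "low_vertex $ Y1 \<noteq> flip_coords UNIV low_vertex $ Y1" by simp
  then show ?thesis by metis
qed

lemma NPadj_01: "v \<in> NPadj A \<Longrightarrow> v$c \<in> {0, 1}"
  by (simp add: NPadj_def)

lemma flip_coords_UNIV_NPadj: "v \<in> NPadj A \<Longrightarrow> flip_coords UNIV v \<in> NPadj A"
  unfolding NPadj_def by (auto simp: algebra_simps)

lemma swap_y_NPadj:
  assumes "v \<in> NPadj A"
  shows "swap_y v \<in> NPadj A"
proof -
  have "swap_y v $ c \<in> {0, 1}" for c
    using NPadj_01[OF assms] by (cases c) simp_all
  then show ?thesis using assms unfolding NPadj_def by (auto simp: algebra_simps)
qed

lemma low_vertex_NPadj: "low_vertex \<in> NPadj A"
proof -
  have "low_vertex $ c \<in> {0, 1}" for c by (cases c) simp_all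
  then show ?thesis by (auto simp: NPadj_def)
qed

lemma three_ones_row:
  fixes A :: "real^('n::{finite,linorder})^('m::finite)"
  assumes "three_ones A"
  obtains r i j k where "i < j" "j < k" "A$r$i = 1" "A$r$j = 1" "A$r$k = 1"
proof -
  fix r :: 'm
  have "card {j. A$r$j = 1} = 3" using assms by (simp add: three_ones_def)
  then obtain x y z where xyz: "{j. A$r$j = 1} = {x, y, z}" "x \<noteq> y" "y \<noteq> z" "x \<noteq> z"
    by (auto simp: card_3_iff)
  then obtain i j k where "i < j" "j < k" and ijk: "{i, j, k} = {x, y, z}"
    by (cases x y rule: linorder_cases; cases y z rule: linorder_cases;
        cases x z rule: linorder_cases) (auto simp: insert_commute)
  then have "{i, j, k} \<subseteq> {l. A$r$l = 1}" using xyz(1) by simp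
  then have "A$r$i = 1" "A$r$j = 1" "A$r$k = 1" by simp_all
  with \<open>i < j\<close> \<open>j < k\<close> show ?thesis by (rule that)
qed

lemma NPadj_y_unbalanced:
  assumes "three_ones A" and v: "v \<in> NPadj A" and "v$Y1 + v$Y2 \<noteq> 1"
  shows "v = low_vertex \<or> v = flip_coords UNIV low_vertex"
proof -
  obtain r i j k where row: "i < j" "j < k" "A$r$i = 1" "A$r$j = 1" "A$r$k = 1"
    using three_ones_row[OF \<open>three_ones A\<close>] .
  obtain t where t: "t \<in> {0, 1}" "v$Y1 = t" "v$Y2 = t"
    using NPadj_01[OF v, of Y1] NPadj_01[OF v, of Y2] \<open>v$Y1 + v$Y2 \<noteq> 1\<close> by auto
  have cols: "v$X l = t" "v$Xb l = 1 - t" "v$Xp l = 1 - t" for l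
  proof -
    have "v$X l + v$Xb l = 1" "v$Y1 + v$Y2 + v$Xp l + v$Xb l = 2"
      using v by (simp_all add: NPadj_def)
    then show "v$X l = t" "v$Xb l = 1 - t" "v$Xp l = 1 - t"
      using t NPadj_01[OF v, of "Xb l"] NPadj_01[OF v, of "Xp l"] by auto
  qed
  have "v$Y3 + v$X i + v$Xp j + v$Xp k = 2"
    using v row unfolding NPadj_def by blast
  then have "v$Y3 = t" using cols by simp
  then have "v$c = (if t = 0 then low_vertex $ c else flip_coords UNIV low_vertex $ c)" for c
    using t cols by (cases c) auto
  then show ?thesis using t by (auto simp: vec_eq_iff)
qed

lemma NPadj_card_mod_4:
  assumes "three_ones A"
  shows "card (NPadj A) mod 4 = 2"
proof -
  define R where "R = {v \<in> NPadj A. v$Y1 + v$Y2 = 1}"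
  have "NPadj A \<subseteq> {v. \<forall>i. v$i \<in> {0, 1}}" by (auto simp: NPadj_def)
  then have "finite (NPadj A)"
    by (rule finite_subset) (rule finite_vectors_with_coords_in, simp)
  then have "finite R" by (simp add: R_def)
  have "NPadj A = R \<union> {low_vertex, flip_coords UNIV low_vertex}"
    using NPadj_y_unbalanced[OF assms] low_vertex_NPadj flip_coords_UNIV_NPadj[OF low_vertex_NPadj]
    unfolding R_def by auto
  moreover have "R \<inter> {low_vertex, flip_coords UNIV low_vertex} = {}"
    by (auto simp: R_def)
  ultimately have card_N: "card (NPadj A) = card R + 2"
    using \<open>finite R\<close> low_vertex_ne_flip_coords by (simp add: card_insert_if)
  have "4 dvd card R"
  proof (rule card_dvd_4_if_free_Klein_action[where g = "flip_coords UNIV" and h = swap_y])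
    show "finite R" by fact
    show "flip_coords UNIV ` R \<subseteq> R" "swap_y ` R \<subseteq> R"
      using flip_coords_UNIV_NPadj swap_y_NPadj by (auto simp: R_def)
    fix x assume "x \<in> R"
    then have "x \<in> NPadj A" "x$Y1 + x$Y2 = 1" by (simp_all add: R_def)
    note x01 = NPadj_01[OF this(1)]
    show "flip_coords UNIV (flip_coords UNIV x) = x" by simp
    show "swap_y (swap_y x) = x" by (simp add: vec_eq_iff swap_y_def split: npc.split)
    show "flip_coords UNIV (swap_y x) = swap_y (flip_coords UNIV x)"
      by (simp add: vec_eq_iff swap_y_def split: npc.split)
    have "flip_coords UNIV x $ Y3 \<noteq> x $ Y3" using x01[of Y3] by auto
    then show "flip_coords UNIV x \<noteq> x" by metis
    have "swap_y x $ Y1 \<noteq> x $ Y1" using x01[of Y1] \<open>x$Y1 + x$Y2 = 1\<close> by auto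
    then show "swap_y x \<noteq> x" by metis
    have "flip_coords UNIV (swap_y x) $ Y3 \<noteq> x $ Y3" using x01[of Y3] by auto
    then show "flip_coords UNIV (swap_y x) \<noteq> x" by metis
  qed
  then show ?thesis using card_N by presburger
qed

theorem theorem2:
  fixes A :: "real^('n::{finite,linorder})^('m::finite)"
    and E :: "'v::finite \<Rightarrow> 'v \<Rightarrow> bool"
  assumes "three_ones A"
    and "card (NPadj A) > 2"
    and "simple_graph E"
  shows "\<not> aff_red (NPadj A) (Stable E)"
proof
  \<comment> \<open>Only the edge inequalities of \<open>Stable E\<close> are used.\<close>
  assume "aff_red (NPadj A) (Stable E)"
  then have "4 dvd card (NPadj A)"
    using aff_red_Stable_card_dvd_4[of "NPadj A" E] NPadj_01 flip_coords_UNIV_NPadj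
      \<open>card (NPadj A) > 2\<close>
    by metis
  then show False using NPadj_card_mod_4[OF \<open>three_ones A\<close>] by auto
qed

end
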